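(* Let $n\ge1$ and let $\omega\subset\mathbb{R}^n$ be a measurable set satisfying $$\liminf_{R\to+\infty}\frac{|\omega\cap B(0,R)|}{|B(0,R)|}>0.$$ Then there exists a constant $C=C(\omega)>1$ such that for every $N\in\mathbb{N}$ and every $f\in\mathcal{E}_N$, $$\|f\|_{L^2(\mathbb{R}^n)}\le C e^{CN}\|f\|_{L^2(\omega)}.$$
   Context: $|A|$ denotes Lebesgue measure and $B(0,R)$ the open Euclidean ball of radius $R$ centered at $0$. The one-dimensional Hermite functions are $\phi_k(x)=\frac{(-1)^k}{\sqrt{2^k k!\sqrt{\pi}}}e^{x^2/2}\frac{d^k}{dx^k}(e^{-x^2})$, $k\in\mathbb{N}$. For $\alpha\in\mathbb{N}^n$, $\Phi_\alpha(x)=\prod_{j=1}^n\phi_{\alpha_j}(x_j)$ and $|\alpha|=\alpha_1+\dots+\alpha_n$. For $N\in\mathbb{N}$, $\mathcal{E}_N=\mathrm{Span}_{\mathbb{C}}\{\Phi_\alpha:\alpha\in\mathbb{N}^n,\ |\alpha|\le N\}$. *)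

theory Defs
  imports "HOL-Analysis.Analysis"
begin

definition hermite_fun :: "nat \<Rightarrow> real \<Rightarrow> real" where
  "hermite_fun k x = (-1) ^ k / sqrt (2 ^ k * fact k * sqrt pi) * exp (x\<^sup>2 / 2)
      * ((deriv ^^ k) (\<lambda>t. exp (- (t\<^sup>2))) x)"

definition hermite_multi :: "('n::finite \<Rightarrow> nat) \<Rightarrow> real ^ 'n \<Rightarrow> real" where
  "hermite_multi \<alpha> x = (\<Prod>j\<in>UNIV. hermite_fun (\<alpha> j) (x $ j))"

definition mi_length :: "('n::finite \<Rightarrow> nat) \<Rightarrow> nat" where
  "mi_length \<alpha> = (\<Sum>j\<in>UNIV. \<alpha> j)"

text \<open>E_N: complex span of the Phi_alpha with |alpha| <= N. The index set is finite,
  so the span is the set of all complex linear combinations over it.\<close>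
definition hermite_space :: "nat \<Rightarrow> (real ^ 'n::finite \<Rightarrow> complex) set" where
  "hermite_space N = {f. \<exists>c :: ('n \<Rightarrow> nat) \<Rightarrow> complex.
      f = (\<lambda>x. \<Sum>\<alpha>\<in>{\<alpha>. mi_length \<alpha> \<le> N}. c \<alpha> * complex_of_real (hermite_multi \<alpha> x))}"

definition L2_norm_on :: "(real ^ 'n::finite) set \<Rightarrow> (real ^ 'n \<Rightarrow> complex) \<Rightarrow> real" where
  "L2_norm_on A f = sqrt (LINT x : A | lebesgue. (cmod (f x))\<^sup>2)"

end

theory Submission
  imports Defs "HOL-Probability.Distributions" "HOL-Computational_Algebra.Polynomial"
begin

text \<open>
  Every f in E_N is P(x) exp(-|x|^2/2) with P a polynomial of degree at most N on every line,
  and nothing else about Hermite functions is used. Choose R1 beyond which \<omega> fills a fixed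
  proportion of every ball B(0,R), put R^2 = R1^2 + N, and let M = |P(a)| be the maximum of |P|
  on the closed ball of radius R. A one-variable Remez inequality along lines through the origin
  gives |P(x)| <= M e^O(N) (1 + |x|/R)^N, and since N <= R^2 the Gaussian absorbs this growth:
  ||f||^2 <= M^2 e^O(N). Along every segment issuing from a, the same inequality shows that
  |P| <= \<rho>^(N+1) e^-O(N) M only on a portion of length at most \<rho>; integrating over all such
  segments bounds the measure of this sublevel set by half of |\<omega> \<inter> B(0,R)|. On the rest of
  \<omega> \<inter> B(0,R) we have |f|^2 >= M^2 e^-O(N), hence ||f||_L2(\<omega>)^2 >= M^2 e^-O(N).
\<close>

section \<open>Hermite functions as polynomials times a Gaussian\<close>

primrec gauss_deriv_poly :: "nat \<Rightarrow> real poly" where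
  "gauss_deriv_poly 0 = 1"
| "gauss_deriv_poly (Suc k) = pderiv (gauss_deriv_poly k) - [:0, 2:] * gauss_deriv_poly k"

lemma degree_gauss_deriv_poly: "degree (gauss_deriv_poly k) \<le> k"
proof (induction k)
  case (Suc k)
  have "degree (pderiv (gauss_deriv_poly k)) \<le> Suc k"
    using Suc by (simp add: degree_pderiv)
  moreover have "degree ([:0, 2:] * gauss_deriv_poly k) \<le> Suc k"
    using degree_mult_le[of "[:0, 2:]" "gauss_deriv_poly k"] Suc by simp
  ultimately show ?case by (simp add: degree_diff_le)
qed simp

lemma higher_deriv_gauss:
  "(deriv ^^ k) (\<lambda>t::real. exp (- t\<^sup>2)) = (\<lambda>t. poly (gauss_deriv_poly k) t * exp (- t\<^sup>2))"
proof (induction k)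
  case (Suc k)
  have "deriv (\<lambda>t. poly (gauss_deriv_poly k) t * exp (- t\<^sup>2)) t =
          poly (gauss_deriv_poly (Suc k)) t * exp (- t\<^sup>2)" for t :: real
  proof -
    have "((\<lambda>t. poly (gauss_deriv_poly k) t * exp (- t\<^sup>2)) has_real_derivative
            poly (pderiv (gauss_deriv_poly k)) t * exp (- t\<^sup>2)
            + poly (gauss_deriv_poly k) t * (exp (- t\<^sup>2) * (- (2 * t)))) (at t)"
      by (auto intro!: derivative_eq_intros poly_DERIV)
    then show ?thesis
      by (simp add: DERIV_imp_deriv algebra_simps)
  qed
  then show ?case using Suc by simp
qed simp

definition hermite_poly :: "nat \<Rightarrow> real poly" where
  "hermite_poly k = smult ((-1) ^ k / sqrt (2 ^ k * fact k * sqrt pi)) (gauss_deriv_poly k)"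

lemma degree_hermite_poly: "degree (hermite_poly k) \<le> k"
  unfolding hermite_poly_def using degree_gauss_deriv_poly[of k] by simp

lemma hermite_fun_eq_poly_gauss: "hermite_fun k x = poly (hermite_poly k) x * exp (- x\<^sup>2 / 2)"
proof -
  have "exp (x\<^sup>2 / 2) * exp (- x\<^sup>2) = exp (- x\<^sup>2 / 2)"
    by (simp add: exp_add[symmetric])
  then show ?thesis
    unfolding hermite_fun_def higher_deriv_gauss hermite_poly_def by (simp add: algebra_simps)
qed

lemma norm_power2_vec: "(norm (x :: real ^ 'n::finite))\<^sup>2 = (\<Sum>j\<in>UNIV. (x $ j)\<^sup>2)"
  by (simp only: power2_norm_eq_inner) (simp add: inner_vec_def power2_eq_square)

lemma hermite_multi_eq_poly_gauss:
  "hermite_multi \<alpha> x = (\<Prod>j\<in>UNIV. poly (hermite_poly (\<alpha> j)) (x $ j)) * exp (- (norm x)\<^sup>2 / 2)"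
proof -
  have "hermite_multi \<alpha> x =
          (\<Prod>j\<in>UNIV. poly (hermite_poly (\<alpha> j)) (x $ j)) * (\<Prod>j\<in>UNIV. exp (- (x $ j)\<^sup>2 / 2))"
    unfolding hermite_multi_def hermite_fun_eq_poly_gauss by (simp add: prod.distrib)
  also have "(\<Prod>j\<in>UNIV. exp (- (x $ j)\<^sup>2 / 2)) = exp (- (norm x)\<^sup>2 / 2)"
    by (simp add: exp_sum[symmetric] norm_power2_vec sum_negf sum_divide_distrib)
  finally show ?thesis .
qed

definition poly_on_lines :: "nat \<Rightarrow> ('a::real_vector \<Rightarrow> complex) \<Rightarrow> bool" where
  "poly_on_lines N P \<longleftrightarrow>
     (\<forall>a v. \<exists>p. degree p \<le> N \<and> (\<forall>t::real. P (a + t *\<^sub>R v) = poly p (complex_of_real t)))"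

lemma poly_on_linesD:
  assumes "poly_on_lines N P"
  obtains p where "degree p \<le> N" "\<And>t::real. P (a + t *\<^sub>R v) = poly p (complex_of_real t)"
  using assms unfolding poly_on_lines_def by blast

lemma poly_on_lines_const: "poly_on_lines N (\<lambda>x. c)"
  unfolding poly_on_lines_def by (intro allI exI[of _ "[:c:]"]) simp

lemma poly_on_lines_mono: "poly_on_lines N P \<Longrightarrow> N \<le> M \<Longrightarrow> poly_on_lines M P"
  unfolding poly_on_lines_def by (meson order_trans)

lemma poly_on_lines_add:
  assumes "poly_on_lines N P" "poly_on_lines N Q"
  shows "poly_on_lines N (\<lambda>x. P x + Q x)"
  unfolding poly_on_lines_def
proof (intro allI)
  fix a v
  obtain p q where "degree p \<le> N" "\<And>t::real. P (a + t *\<^sub>R v) = poly p (complex_of_real t)"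
    and "degree q \<le> N" "\<And>t::real. Q (a + t *\<^sub>R v) = poly q (complex_of_real t)"
    using assms by (metis poly_on_linesD)
  then show "\<exists>r. degree r \<le> N \<and> (\<forall>t::real. P (a + t *\<^sub>R v) + Q (a + t *\<^sub>R v) = poly r (complex_of_real t))"
    by (intro exI[of _ "p + q"]) (simp add: degree_add_le)
qed

lemma poly_on_lines_mult:
  assumes "poly_on_lines N P" "poly_on_lines M Q"
  shows "poly_on_lines (N + M) (\<lambda>x. P x * Q x)"
  unfolding poly_on_lines_def
proof (intro allI)
  fix a v
  obtain p q where "degree p \<le> N" "\<And>t::real. P (a + t *\<^sub>R v) = poly p (complex_of_real t)"
    and "degree q \<le> M" "\<And>t::real. Q (a + t *\<^sub>R v) = poly q (complex_of_real t)"
    using assms by (metis poly_on_linesD)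
  moreover from this have "degree (p * q) \<le> N + M"
    using degree_mult_le[of p q] by simp
  ultimately show "\<exists>r. degree r \<le> N + M \<and>
      (\<forall>t::real. P (a + t *\<^sub>R v) * Q (a + t *\<^sub>R v) = poly r (complex_of_real t))"
    by (intro exI[of _ "p * q"]) simp
qed

lemma poly_on_lines_sum:
  "(\<And>a. a \<in> A \<Longrightarrow> poly_on_lines N (P a)) \<Longrightarrow> poly_on_lines N (\<lambda>x. \<Sum>a\<in>A. P a x)"
  by (induction A rule: infinite_finite_induct) (auto intro: poly_on_lines_add poly_on_lines_const)

lemma poly_on_lines_prod:
  "finite A \<Longrightarrow> (\<And>a. a \<in> A \<Longrightarrow> poly_on_lines (d a) (P a)) \<Longrightarrow>
     poly_on_lines (\<Sum>a\<in>A. d a) (\<lambda>x. \<Prod>a\<in>A. P a x)"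
  by (induction A rule: finite_induct) (auto intro: poly_on_lines_mult poly_on_lines_const)

lemma poly_map_of_real: "poly (map_poly complex_of_real p) (complex_of_real t) = complex_of_real (poly p t)"
  by (induct p) (simp_all add: map_poly_pCons)

lemma poly_on_lines_component:
  assumes "degree h \<le> k"
  shows "poly_on_lines k (\<lambda>x::real ^ 'n::finite. complex_of_real (poly h (x $ j)))"
  unfolding poly_on_lines_def
proof (intro allI)
  fix a v :: "real ^ 'n"
  let ?p = "map_poly complex_of_real (h \<circ>\<^sub>p [:a $ j, v $ j:])"
  have "degree ?p \<le> degree (h \<circ>\<^sub>p [:a $ j, v $ j:])" by (rule map_poly_degree_leq)
  also have "\<dots> \<le> degree h * degree [:a $ j, v $ j:]" by (rule degree_pcompose_le)
  also have "\<dots> \<le> k" using assms by (cases "v $ j = 0") auto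
  finally show "\<exists>p. degree p \<le> k \<and>
      (\<forall>t::real. complex_of_real (poly h ((a + t *\<^sub>R v) $ j)) = poly p (complex_of_real t))"
    by (intro exI[of _ ?p]) (simp add: poly_map_of_real poly_pcompose algebra_simps)
qed

lemma hermite_space_eq_poly_gauss:
  fixes f :: "real ^ 'n::finite \<Rightarrow> complex"
  assumes "f \<in> hermite_space N"
  obtains P where "poly_on_lines N P" "continuous_on UNIV P"
    "f = (\<lambda>x. P x * complex_of_real (exp (- (norm x)\<^sup>2 / 2)))"
proof -
  obtain c where c: "f = (\<lambda>x. \<Sum>\<alpha>\<in>{\<alpha>. mi_length \<alpha> \<le> N}. c \<alpha> * complex_of_real (hermite_multi \<alpha> x))"
    using assms unfolding hermite_space_def by blast
  define Q where "Q \<alpha> x = (\<Prod>j\<in>UNIV. complex_of_real (poly (hermite_poly (\<alpha> j)) (x $ j)))"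
    for \<alpha> and x :: "real ^ 'n"
  define P where "P x = (\<Sum>\<alpha>\<in>{\<alpha>. mi_length \<alpha> \<le> N}. c \<alpha> * Q \<alpha> x)" for x
  have "poly_on_lines N P"
    unfolding P_def
  proof (rule poly_on_lines_sum)
    fix \<alpha> :: "'n \<Rightarrow> nat"
    assume "\<alpha> \<in> {\<alpha>. mi_length \<alpha> \<le> N}"
    then have "(\<Sum>j\<in>UNIV. \<alpha> j) \<le> N" by (simp add: mi_length_def)
    moreover have "poly_on_lines (\<Sum>j\<in>UNIV. \<alpha> j) (Q \<alpha>)"
      unfolding Q_def
      by (rule poly_on_lines_prod) (auto intro: poly_on_lines_component degree_hermite_poly)
    ultimately have "poly_on_lines N (Q \<alpha>)" by (blast intro: poly_on_lines_mono)
    then show "poly_on_lines N (\<lambda>x. c \<alpha> * Q \<alpha> x)"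
      using poly_on_lines_mult[OF poly_on_lines_const[of 0]] by fastforce
  qed
  moreover have "continuous_on UNIV P"
    unfolding P_def Q_def by (intro continuous_intros)
  moreover have "f = (\<lambda>x. P x * complex_of_real (exp (- (norm x)\<^sup>2 / 2)))"
    unfolding c P_def Q_def hermite_multi_eq_poly_gauss by (simp add: sum_distrib_right mult.assoc)
  ultimately show ?thesis using that by blast
qed


section \<open>A Remez inequality for polynomials of one variable\<close>

lemma poly_lagrange_interpolation:
  fixes q :: "'a::field poly" and z :: "nat \<Rightarrow> 'a"
  assumes dq: "degree q \<le> N" and inj: "inj_on z {..N}"
  shows "poly q w = (\<Sum>i\<le>N. poly q (z i) * (\<Prod>j\<in>{..N}-{i}. (w - z j) / (z i - z j)))"
proof -
  define L where "L = (\<Sum>i\<le>N. smult (poly q (z i) / (\<Prod>j\<in>{..N}-{i}. (z i - z j)))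
                                    (\<Prod>j\<in>{..N}-{i}. [:- z j, 1:]))"
  have poly_L: "poly L w = (\<Sum>i\<le>N. poly q (z i) * (\<Prod>j\<in>{..N}-{i}. (w - z j) / (z i - z j)))" for w
    unfolding L_def by (simp add: poly_sum poly_prod prod_dividef)
  have "degree L \<le> N"
    unfolding L_def
  proof (rule degree_sum_le)
    fix i assume i: "i \<in> {..N}"
    have "degree (\<Prod>j\<in>{..N}-{i}. [:- z j, 1:]) \<le> (\<Sum>j\<in>{..N}-{i}. degree [:- z j, 1:])"
      using degree_prod_sum_le[of "{..N}-{i}" "\<lambda>j. [:- z j, 1:]"] by (simp add: o_def)
    also have "\<dots> = N" using i by (simp add: card_Diff_singleton)
    finally show "degree (smult (poly q (z i) / (\<Prod>j\<in>{..N}-{i}. (z i - z j)))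
                    (\<Prod>j\<in>{..N}-{i}. [:- z j, 1:])) \<le> N"
      by (meson degree_smult_le order_trans)
  qed simp
  have L_nodes: "poly L (z k) = poly q (z k)" if k: "k \<le> N" for k
  proof -
    have "poly q (z i) * (\<Prod>j\<in>{..N}-{i}. (z k - z j) / (z i - z j)) = (if i = k then poly q (z k) else 0)"
      if i: "i \<le> N" for i
    proof (cases "i = k")
      case True
      have "(z k - z j) / (z i - z j) = 1" if "j \<in> {..N}-{i}" for j
        using that i True inj by (auto dest: inj_onD)
      then show ?thesis using True by simp
    next
      case False
      then have "k \<in> {..N}-{i}" using k by auto
      then have "(\<Prod>j\<in>{..N}-{i}. (z k - z j) / (z i - z j)) = 0"
        by (intro prod_zero) auto
      then show ?thesis using False by simp
    qed
    then show ?thesis unfolding poly_L using k by simp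
  qed
  have "q = L"
  proof (rule ccontr)
    assume ne: "q \<noteq> L"
    then have "q - L \<noteq> 0" by simp
    have "z ` {..N} \<subseteq> {x. poly (q - L) x = 0}" using L_nodes by auto
    then have "card (z ` {..N}) \<le> card {x. poly (q - L) x = 0}"
      using \<open>q - L \<noteq> 0\<close> by (intro card_mono poly_roots_finite)
    also have "\<dots> \<le> degree (q - L)" by (rule card_poly_roots_bound[OF \<open>q - L \<noteq> 0\<close>])
    also have "\<dots> \<le> N" using dq \<open>degree L \<le> N\<close> by (simp add: degree_diff_le)
    finally show False using card_image[OF inj] by simp
  qed
  then have "poly q w = poly L w" by simp
  also have "\<dots> = (\<Sum>i\<le>N. poly q (z i) * (\<Prod>j\<in>{..N}-{i}. (w - z j) / (z i - z j)))"
    by (rule poly_L)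
  finally show ?thesis .
qed

lemma prod_abs_diff_of_nat:
  assumes "i \<le> N"
  shows "(\<Prod>j\<in>{..N}-{i}. \<bar>real i - real j\<bar>) = fact i * fact (N - i)"
proof -
  have below: "(\<Prod>j<k. real k - real j) = fact k" for k
  proof (induction k)
    case (Suc k)
    have "(\<Prod>j<Suc k. real (Suc k) - real j) = (real (Suc k) - real 0) * (\<Prod>j<k. real (Suc k) - real (Suc j))"
      by (rule prod.lessThan_Suc_shift)
    then show ?case using Suc by simp
  qed simp
  have above: "(\<Prod>j\<in>{i<..M}. real j - real i) = fact (M - i)" if "i \<le> M" for M
    using that
  proof (induction M)
    case (Suc M)
    show ?case
    proof (cases "i = Suc M")
      case False
      then have iM: "i \<le> M" using Suc.prems by simp
      have "{i<..Suc M} = insert (Suc M) {i<..M}" using iM by auto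
      then have "(\<Prod>j\<in>{i<..Suc M}. real j - real i) = (real (Suc M) - real i) * fact (M - i)"
        using Suc.IH iM by simp
      also have "\<dots> = fact (Suc M - i)"
        using iM by (simp add: Suc_diff_le fact_Suc of_nat_diff)
      finally show ?thesis .
    qed simp
  qed simp
  have split: "{..N}-{i} = {..<i} \<union> {i<..N}" using assms by auto
  have "(\<Prod>j\<in>{..N}-{i}. \<bar>real i - real j\<bar>) =
          (\<Prod>j\<in>{..<i}. \<bar>real i - real j\<bar>) * (\<Prod>j\<in>{i<..N}. \<bar>real i - real j\<bar>)"
    unfolding split by (rule prod.union_disjoint) auto
  also have "(\<Prod>j\<in>{..<i}. \<bar>real i - real j\<bar>) = (\<Prod>j<i. real i - real j)"
    by (rule prod.cong) auto
  also have "(\<Prod>j\<in>{i<..N}. \<bar>real i - real j\<bar>) = (\<Prod>j\<in>{i<..N}. real j - real i)"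
    by (rule prod.cong) auto
  finally show ?thesis using below above[OF assms] by simp
qed

lemma fact_div_power2_le_fact_mult:
  assumes "i \<le> N"
  shows "fact N / 2 ^ N \<le> (fact i * fact (N - i) :: real)"
proof -
  have "fact i * fact (N - i) * (N choose i) = (fact N :: nat)"
    by (rule binomial_fact_lemma[OF assms])
  then have binom: "real (fact i * fact (N - i)) * real (N choose i) = fact N"
    by (metis of_nat_fact of_nat_mult)
  have "real (N choose i) \<le> 2 ^ N"
    by (metis binomial_le_pow2 of_nat_le_iff of_nat_numeral of_nat_power)
  moreover have "real (N choose i) > 0" using assms by simp
  ultimately have "fact N / 2 ^ N \<le> fact N / real (N choose i)"
    by (intro divide_left_mono) auto
  also have "\<dots> = real (fact i * fact (N - i))"
    using binom \<open>real (N choose i) > 0\<close> by (simp add: field_simps)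
  finally show ?thesis by simp
qed

lemma power_div_fact_le_exp: "0 \<le> (x::real) \<Longrightarrow> x ^ n / fact n \<le> exp x"
proof -
  assume x: "0 \<le> x"
  have s: "(\<lambda>n. x^n /\<^sub>R fact n) sums exp x" by (rule exp_converges)
  have "sum (\<lambda>n. x^n /\<^sub>R fact n) {n} \<le> suminf (\<lambda>n. x^n /\<^sub>R fact n)"
    by (rule sum_le_suminf) (use s x in \<open>auto simp: sums_iff\<close>)
  then show ?thesis using s by (simp add: sums_iff divide_inverse mult.commute)
qed

lemma measure_Int_atMost_add:
  fixes T :: "real set"
  assumes "T \<in> sets borel" "bounded T" "s \<le> t"
  shows "measure lborel (T \<inter> {..t}) = measure lborel (T \<inter> {..s}) + measure lborel (T \<inter> {s<..t})"
    and "measure lborel (T \<inter> {s<..t}) \<le> t - s"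
proof -
  have fin: "T \<inter> X \<in> fmeasurable lborel" if "X \<in> sets borel" for X
    using assms that emeasure_bounded_finite[of "T \<inter> X"]
    by (intro fmeasurableI) (auto intro: bounded_subset)
  have "T \<inter> {..t} = (T \<inter> {..s}) \<union> (T \<inter> {s<..t})" using assms(3) by auto
  moreover have "measure lborel ((T \<inter> {..s}) \<union> (T \<inter> {s<..t})) =
                   measure lborel (T \<inter> {..s}) + measure lborel (T \<inter> {s<..t})"
    using fin[of "{..s}"] fin[of "{s<..t}"] by (intro measure_Union) (auto simp: fmeasurable_def)
  ultimately show "measure lborel (T \<inter> {..t}) = measure lborel (T \<inter> {..s}) + measure lborel (T \<inter> {s<..t})"
    by simp
  have "measure lborel (T \<inter> {s<..t}) \<le> measure lborel {s<..t}"
    using fin[of "{s<..t}"] emeasure_bounded_finite[of "{s<..t}"]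
    by (intro measure_mono_fmeasurable) (auto intro: fmeasurableI)
  then show "measure lborel (T \<inter> {s<..t}) \<le> t - s" using assms(3) by simp
qed

lemma lipschitz_measure_Int_atMost:
  fixes T :: "real set"
  assumes "T \<in> sets borel" "bounded T"
  shows "\<bar>measure lborel (T \<inter> {..t}) - measure lborel (T \<inter> {..s})\<bar> \<le> \<bar>t - s\<bar>"
  using measure_Int_atMost_add[OF assms, of s t] measure_Int_atMost_add[OF assms, of t s]
  by (cases "s \<le> t") auto

lemma closed_set_has_measure_quantile:
  fixes T :: "real set"
  assumes cl: "closed T" and bd: "bounded T" and c: "0 < c" "c < measure lborel T"
  shows "\<exists>x\<in>T. measure lborel (T \<inter> {..x}) = c"
proof -
  define F where "F t = measure lborel (T \<inter> {..t})" for t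
  have Tb: "T \<in> sets borel" using cl by (simp add: borel_closed)
  note lip = lipschitz_measure_Int_atMost[OF Tb bd, folded F_def]
  obtain B where B: "\<forall>x\<in>T. \<bar>x\<bar> \<le> B" using bd unfolding bounded_iff by auto
  have "continuous_on UNIV F"
    unfolding continuous_on_iff
  proof (intro ballI allI impI)
    fix x e :: real assume "0 < e"
    then show "\<exists>d>0. \<forall>x'\<in>UNIV. dist x' x < d \<longrightarrow> dist (F x') (F x) < e"
      using lip by (intro exI[of _ e]) (auto simp: dist_real_def intro: le_less_trans)
  qed
  then have clA: "closed {t. c \<le> F t}" by (intro closed_Collect_le) auto
  have "T \<inter> {..B} = T" using B by auto
  then have "B \<in> {t. c \<le> F t}" using c unfolding F_def by simp
  have F_low: "F t = 0" if "t < - B" for t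
  proof -
    have "T \<inter> {..t} = {}" using B that by force
    then show ?thesis unfolding F_def by simp
  qed
  have bdd: "bdd_below {t. c \<le> F t}"
  proof (rule bdd_belowI[of _ "- B"])
    fix t assume "t \<in> {t. c \<le> F t}"
    then show "- B \<le> t" using F_low[of t] c by (cases "t < - B") auto
  qed
  define x where "x = Inf {t. c \<le> F t}"
  have x_in: "c \<le> F x"
    using closed_contains_Inf[OF _ bdd clA] \<open>B \<in> {t. c \<le> F t}\<close> unfolding x_def by blast
  have x_least: "x \<le> t" if "c \<le> F t" for t
    unfolding x_def using that bdd by (simp add: cInf_lower)
  have Fx: "F x = c"
  proof (rule ccontr)
    assume "F x \<noteq> c"
    then have "c < F x" using x_in by simp
    define t where "t = x - (F x - c) / 2"
    have "F x - F t \<le> \<bar>x - t\<bar>" using lip[of x t] by (meson abs_ge_self order_trans)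
    moreover have "\<bar>x - t\<bar> = (F x - c) / 2" unfolding t_def using \<open>c < F x\<close> by simp
    ultimately have "c \<le> F t" using \<open>c < F x\<close> by argo
    then have "x \<le> t" by (rule x_least)
    then show False using \<open>c < F x\<close> unfolding t_def by simp
  qed
  have "x \<in> T"
  proof (rule ccontr)
    assume "x \<notin> T"
    then obtain e where e: "e > 0" "ball x e \<subseteq> - T"
      using cl open_contains_ball[of "- T"] by (auto simp: open_Compl)
    define t where "t = x - e / 2"
    have "{t<..x} \<subseteq> ball x e" unfolding t_def using e by (auto simp: dist_real_def)
    then have "T \<inter> {t<..x} = {}" using e by auto
    then have "F x = F t"
      using measure_Int_atMost_add(1)[OF Tb bd, of t x] e unfolding F_def t_def by simp
    then have "x \<le> t" using Fx x_least by simp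
    then show False unfolding t_def using e by simp
  qed
  then show ?thesis using Fx unfolding F_def by blast
qed

text \<open>The \<open>N+1\<close> quantile points of \<open>T\<close> at levels \<open>(i + 1/2)|T|/(N+1)\<close> are \<open>|T|/(N+1)\<close>-separated,
  because the distribution function of \<open>T\<close> is 1-Lipschitz.\<close>
lemma exists_separated_points:
  fixes T :: "real set"
  assumes cl: "closed T" and bd: "bounded T" and tp: "measure lborel T > 0"
  shows "\<exists>xs. (\<forall>i\<le>N. xs i \<in> T) \<and>
           (\<forall>i\<le>N. \<forall>j\<le>N. \<bar>real i - real j\<bar> * (measure lborel T / (N+1)) \<le> \<bar>xs i - xs j\<bar>)"
proof -
  define \<tau> where "\<tau> = measure lborel T"
  define c where "c i = (real i + 1/2) * (\<tau> / (N+1))" for i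
  have Tb: "T \<in> sets borel" using cl by (simp add: borel_closed)
  have "\<exists>x\<in>T. measure lborel (T \<inter> {..x}) = c i" if "i \<le> N" for i
  proof (rule closed_set_has_measure_quantile[OF cl bd])
    show "0 < c i" using tp unfolding c_def \<tau>_def by simp
    have "c i = \<tau> * ((real i + 1/2) / (real N + 1))" unfolding c_def by (simp add: field_simps)
    also have "\<dots> < \<tau> * 1" using that tp unfolding \<tau>_def by (intro mult_strict_left_mono) auto
    finally show "c i < measure lborel T" unfolding \<tau>_def by simp
  qed
  then obtain xs where xs: "\<And>i. i \<le> N \<Longrightarrow> xs i \<in> T \<and> measure lborel (T \<inter> {..xs i}) = c i"
    by metis
  have "\<bar>real i - real j\<bar> * (\<tau> / (N+1)) \<le> \<bar>xs i - xs j\<bar>" if "i \<le> N" "j \<le> N" for i j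
  proof -
    have "c i - c j = (real i - real j) * (\<tau> / (N+1))"
      unfolding c_def by (simp add: algebra_simps diff_divide_distrib)
    then have "\<bar>real i - real j\<bar> * (\<tau> / (N+1)) = \<bar>c i - c j\<bar>"
      using tp unfolding \<tau>_def by (simp add: abs_mult)
    also have "\<dots> \<le> \<bar>xs i - xs j\<bar>"
      using xs[OF that(1)] xs[OF that(2)] lipschitz_measure_Int_atMost[OF Tb bd, of "xs i" "xs j"]
      by simp
    finally show ?thesis .
  qed
  then show ?thesis using xs unfolding \<tau>_def by blast
qed


lemma lagrange_basis_bound:
  fixes xs :: "nat \<Rightarrow> real"
  assumes h: "h > 0" and i: "i \<le> N"
    and sep: "\<And>i j. i \<le> N \<Longrightarrow> j \<le> N \<Longrightarrow> h * \<bar>real i - real j\<bar> \<le> \<bar>xs i - xs j\<bar>"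
    and dist: "\<And>j. j \<le> N \<Longrightarrow> \<bar>x - xs j\<bar> \<le> D"
  shows "\<bar>\<Prod>j\<in>{..N}-{i}. (x - xs j) / (xs i - xs j)\<bar> \<le> (2 * D / h) ^ N / fact N"
proof -
  have D0: "0 \<le> D" using dist[of 0] by linarith
  have "\<bar>\<Prod>j\<in>{..N}-{i}. (x - xs j) / (xs i - xs j)\<bar> = (\<Prod>j\<in>{..N}-{i}. \<bar>x - xs j\<bar> / \<bar>xs i - xs j\<bar>)"
    by (simp add: abs_prod abs_divide)
  also have "\<dots> \<le> (\<Prod>j\<in>{..N}-{i}. D / (h * \<bar>real i - real j\<bar>))"
  proof (rule prod_mono)
    fix j assume j: "j \<in> {..N}-{i}"
    then have "0 < h * \<bar>real i - real j\<bar>" using h by simp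
    then show "0 \<le> \<bar>x - xs j\<bar> / \<bar>xs i - xs j\<bar> \<and> \<bar>x - xs j\<bar> / \<bar>xs i - xs j\<bar> \<le> D / (h * \<bar>real i - real j\<bar>)"
      using dist[of j] sep[of i j] i j D0 by (auto intro: frac_le)
  qed
  also have "\<dots> = D ^ N / (h ^ N * (fact i * fact (N - i)))"
    using i by (simp add: prod_dividef prod.distrib card_Diff_singleton prod_abs_diff_of_nat)
  also have "\<dots> \<le> D ^ N / (h ^ N * (fact N / 2 ^ N))"
    using fact_div_power2_le_fact_mult[OF i] h D0 by (intro divide_left_mono mult_left_mono mult_pos_pos) auto
  also have "\<dots> = (2 * D / h) ^ N / fact N"
    by (simp add: power_divide power_mult_distrib)
  finally show ?thesis .
qed

lemma remez_inequality:
  fixes q :: "complex poly" and T :: "real set"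
  assumes dq: "degree q \<le> N" and cl: "closed T" and bd: "bounded T"
    and tp: "measure lborel T > 0"
    and bnd: "\<And>t. t \<in> T \<Longrightarrow> cmod (poly q (complex_of_real t)) \<le> m"
    and dist: "\<And>t. t \<in> T \<Longrightarrow> \<bar>t - x\<bar> \<le> D"
  shows "cmod (poly q (complex_of_real x))
           \<le> m * (real N + 1) * exp (real N + 1) * (2 * D / measure lborel T) ^ N"
proof -
  define \<tau> where "\<tau> = measure lborel T"
  define h where "h = \<tau> / (N+1)"
  have hp: "h > 0" unfolding h_def \<tau>_def using tp by simp
  have h_eq: "2 * D / h = (2 * D / \<tau>) * (real N + 1)"
    unfolding h_def by (simp add: field_simps)
  obtain xs where xsT: "\<And>i. i \<le> N \<Longrightarrow> xs i \<in> T"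
    and sep: "\<And>i j. i \<le> N \<Longrightarrow> j \<le> N \<Longrightarrow> h * \<bar>real i - real j\<bar> \<le> \<bar>xs i - xs j\<bar>"
    using exists_separated_points[OF cl bd tp, of N] unfolding h_def \<tau>_def by (auto simp: mult.commute)
  have m0: "0 \<le> m" using bnd[OF xsT[OF le0]] by (meson norm_ge_zero order_trans)
  define z where "z i = complex_of_real (xs i)" for i
  have "inj_on z {..N}"
  proof (rule inj_onI)
    fix i j assume "i \<in> {..N}" "j \<in> {..N}" "z i = z j"
    then have "h * \<bar>real i - real j\<bar> \<le> 0" using sep[of i j] unfolding z_def by simp
    then show "i = j" using hp by (simp add: mult_le_0_iff)
  qed
  then have "poly q (complex_of_real x) =
      (\<Sum>i\<le>N. poly q (z i) * (\<Prod>j\<in>{..N}-{i}. (complex_of_real x - z j) / (z i - z j)))"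
    by (rule poly_lagrange_interpolation[OF dq])
  also have "\<dots> = (\<Sum>i\<le>N. poly q (z i) * complex_of_real (\<Prod>j\<in>{..N}-{i}. (x - xs j) / (xs i - xs j)))"
    unfolding z_def by simp
  finally have "cmod (poly q (complex_of_real x)) \<le>
      (\<Sum>i\<le>N. cmod (poly q (z i)) * \<bar>\<Prod>j\<in>{..N}-{i}. (x - xs j) / (xs i - xs j)\<bar>)"
    by (metis (no_types, lifting) norm_mult norm_of_real norm_sum sum.cong)
  also have "\<dots> \<le> (\<Sum>i\<le>N. m * ((2 * D / h) ^ N / fact N))"
  proof (intro sum_mono mult_mono)
    fix i assume "i \<in> {..N}"
    then show "cmod (poly q (z i)) \<le> m" using bnd xsT unfolding z_def by simp
    show "\<bar>\<Prod>j\<in>{..N}-{i}. (x - xs j) / (xs i - xs j)\<bar> \<le> (2 * D / h) ^ N / fact N"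
      by (rule lagrange_basis_bound[OF hp _ sep])
        (use \<open>i \<in> {..N}\<close> dist[OF xsT] in \<open>auto simp: abs_minus_commute\<close>)
  qed (use m0 in auto)
  also have "\<dots> = m * (2 * D / \<tau>) ^ N * (real N + 1) * ((real N + 1) ^ N / fact N)"
    unfolding h_eq power_mult_distrib by (simp add: algebra_simps add_divide_distrib)
  also have "\<dots> \<le> m * (2 * D / \<tau>) ^ N * (real N + 1) * exp (real N + 1)"
  proof -
    have "(real N + 1) ^ Suc N / fact (Suc N) = ((real N + 1) * (real N + 1) ^ N) / ((real N + 1) * fact N)"
      by (simp only: fact_Suc power_Suc of_nat_Suc) (simp add: add.commute)
    also have "\<dots> = (real N + 1) ^ N / fact N"
      by (rule mult_divide_mult_cancel_left) simp
    finally have "(real N + 1) ^ N / fact N = (real N + 1) ^ Suc N / fact (Suc N)" ..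
    also have "\<dots> \<le> exp (real N + 1)" by (rule power_div_fact_le_exp) simp
    finally show ?thesis
      using m0 dist[OF xsT[OF le0]] tp unfolding \<tau>_def by (intro mult_left_mono) auto
  qed
  finally show ?thesis unfolding \<tau>_def by (simp add: ac_simps)
qed

section \<open>Functions that are polynomials on lines: growth and small values\<close>

lemma poly_on_lines_growth:
  fixes P :: "'a::real_normed_vector \<Rightarrow> complex"
  assumes P: "poly_on_lines N P" and R: "R > 0" and bnd: "\<And>y. y \<in> cball 0 R \<Longrightarrow> cmod (P y) \<le> M"
  shows "cmod (P x) \<le> M * (real N + 1) * exp (real N + 1) * ((norm x + R) / R) ^ N"
proof (cases "x = 0")
  case True
  have "0 \<le> M" using bnd[of 0] R by (meson centre_in_cball less_imp_le norm_ge_zero order_trans)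
  moreover have "1 * 1 \<le> (real N + 1) * exp (real N + 1)"
    by (intro mult_mono) auto
  ultimately have "M \<le> M * ((real N + 1) * exp (real N + 1))"
    by (metis mult_left_mono mult.right_neutral)
  then show ?thesis using bnd[of 0] True R by (simp add: ac_simps)
next
  case False
  then have nx: "norm x > 0" by simp
  obtain p where dp: "degree p \<le> N" and p: "\<And>t::real. P (0 + t *\<^sub>R x) = poly p (complex_of_real t)"
    using poly_on_linesD[OF P] by blast
  define T where "T = {- R / norm x .. R / norm x}"
  have mT: "measure lborel T = 2 * R / norm x" unfolding T_def using R nx by simp
  have "cmod (poly p (complex_of_real 1)) \<le>
          M * (real N + 1) * exp (real N + 1) * (2 * (1 + R / norm x) / measure lborel T) ^ N"
  proof (rule remez_inequality[OF dp])
    fix t assume "t \<in> T"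
    then have "\<bar>t\<bar> * norm x \<le> R" unfolding T_def using nx by (auto simp: field_simps abs_le_iff)
    then show "cmod (poly p (complex_of_real t)) \<le> M" using bnd[of "t *\<^sub>R x"] p[of t] by simp
  qed (use R nx in \<open>auto simp: T_def mT\<close>)
  also have "2 * (1 + R / norm x) / measure lborel T = (norm x + R) / R"
    unfolding mT using nx R by (simp add: field_simps)
  finally show ?thesis using p[of 1] by simp
qed

lemma poly_on_lines_small_on_segment:
  fixes P :: "'a::real_vector \<Rightarrow> complex"
  assumes P: "poly_on_lines N P" and M: "cmod (P a) = M" "M > 0" and \<rho>: "0 < \<rho>" "\<rho> < 1"
  shows "measure lborel {t\<in>{0..1}. cmod (P (a + t *\<^sub>R v))
            \<le> \<rho> ^ (N+1) / ((real N + 1) * exp (real N + 1) * 2 ^ N) * M} \<le> \<rho>"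
proof -
  define \<epsilon> where "\<epsilon> = \<rho> ^ (N+1) / ((real N + 1) * exp (real N + 1) * 2 ^ N)"
  obtain p where dp: "degree p \<le> N" and p: "\<And>t::real. P (a + t *\<^sub>R v) = poly p (complex_of_real t)"
    using poly_on_linesD[OF P] by blast
  define T where "T = {t\<in>{0..1}. cmod (poly p (complex_of_real t)) \<le> \<epsilon> * M}"
  have "closed T"
  proof -
    have "T = {0..1} \<inter> {t. cmod (poly p (complex_of_real t)) \<le> \<epsilon> * M}" unfolding T_def by auto
    also have "closed \<dots>" by (intro closed_Int closed_real_atLeastAtMost closed_Collect_le continuous_intros)
    finally show ?thesis .
  qed
  have "measure lborel T \<le> \<rho>"
  proof (rule ccontr)
    assume "\<not> measure lborel T \<le> \<rho>"
    then have \<tau>: "\<rho> < measure lborel T" by simp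
    have "M = cmod (poly p (complex_of_real 0))" using p[of 0] M by simp
    also have "\<dots> \<le> \<epsilon> * M * (real N + 1) * exp (real N + 1) * (2 * 1 / measure lborel T) ^ N"
      by (rule remez_inequality[OF dp \<open>closed T\<close>]) (use \<tau> \<rho> in \<open>auto simp: T_def intro: bounded_subset[of "{0..1}"]\<close>)
    also have "\<dots> = \<epsilon> * ((real N + 1) * exp (real N + 1) * 2 ^ N) * M / measure lborel T ^ N"
      by (simp add: power_divide mult_ac)
    also have "\<epsilon> * ((real N + 1) * exp (real N + 1) * 2 ^ N) = \<rho> ^ (N+1)"
      unfolding \<epsilon>_def by (simp add: add_pos_nonneg)
    finally have "measure lborel T ^ N \<le> \<rho> ^ (N+1)"
      using M \<tau> \<rho> by (simp add: field_simps)
    moreover have "\<rho> ^ N \<le> measure lborel T ^ N" using \<tau> \<rho> by (intro power_mono) auto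
    moreover have "\<rho> ^ (N+1) < \<rho> ^ N" using \<rho> by (simp add: power_strict_decreasing_iff)
    ultimately show False by simp
  qed
  then show ?thesis unfolding \<epsilon>_def[symmetric] T_def using p by simp
qed


lemma closed_Collect_continuous_mem:
  fixes f :: "'a::metric_space \<Rightarrow> 'b::metric_space"
  shows "closed S \<Longrightarrow> continuous_on UNIV f \<Longrightarrow> closed {x. f x \<in> S}"
  using continuous_closed_vimage[of S f] by (simp add: vimage_def continuous_on_eq_continuous_at)

lemma emeasure_le_emeasure_homothety_vimage:
  fixes S :: "'a::euclidean_space set"
  assumes S: "S \<in> sets lborel" and t: "0 < t" "t \<le> 1"
  shows "emeasure lborel S \<le> emeasure lborel {y. a + t *\<^sub>R (y - a) \<in> S}"
proof -
  define A where "A = {y. a + t *\<^sub>R (y - a) \<in> S}"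
  have "A \<in> sets lborel"
    unfolding A_def using S by measurable
  have "(\<lambda>y. t *\<^sub>R y + (1 - t) *\<^sub>R a) ` A = S"
  proof
    show "(\<lambda>y. t *\<^sub>R y + (1 - t) *\<^sub>R a) ` A \<subseteq> S"
      unfolding A_def by (auto simp: algebra_simps)
    show "S \<subseteq> (\<lambda>y. t *\<^sub>R y + (1 - t) *\<^sub>R a) ` A"
    proof
      fix s assume "s \<in> S"
      moreover have "a + t *\<^sub>R ((a + (1/t) *\<^sub>R (s - a)) - a) = s" using t by simp
      ultimately show "s \<in> (\<lambda>y. t *\<^sub>R y + (1 - t) *\<^sub>R a) ` A"
        unfolding A_def by (intro image_eqI[of _ _ "a + (1/t) *\<^sub>R (s - a)"]) (auto simp: algebra_simps)
    qed
  qed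
  then have "emeasure lborel S = ennreal (\<bar>t\<bar> ^ DIM('a)) * emeasure lebesgue A"
    using S emeasure_lebesgue_affine[of t "(1 - t) *\<^sub>R a" A] by simp
  also have "\<dots> \<le> 1 * emeasure lebesgue A"
    using t by (intro mult_right_mono) (auto simp: power_le_one)
  finally show ?thesis using \<open>A \<in> sets lborel\<close> unfolding A_def by simp
qed

lemma mem_cball_of_segment_point:
  fixes a y :: "'a::real_normed_vector"
  assumes "norm (a + t *\<^sub>R (y - a)) \<le> R" "norm a \<le> R" "1/2 \<le> t"
  shows "y \<in> cball a (4 * R)"
proof -
  have "t * norm (y - a) \<le> 2 * R"
    using assms norm_triangle_ineq4[of "a + t *\<^sub>R (y - a)" a] by simp
  moreover have "(1/2) * norm (y - a) \<le> t * norm (y - a)" using assms by (intro mult_right_mono) auto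
  ultimately show ?thesis by (simp add: dist_norm norm_minus_commute)
qed

text \<open>Each point of \<open>S\<close> is seen from \<open>a\<close> at a parameter \<open>t \<in> [1/2, 1]\<close> along a segment \<open>[a, y]\<close>
  with \<open>y \<in> cball a (4R)\<close>; integrating over \<open>t\<close> and \<open>y\<close> (Fubini) bounds \<open>|S|/2\<close> by
  \<open>\<rho> |cball a (4R)|\<close>.\<close>
lemma measure_le_of_segment_sections:
  fixes S :: "'a::euclidean_space set"
  assumes S: "closed S" "S \<subseteq> cball 0 R" and a: "norm a \<le> R" and \<rho>: "0 \<le> \<rho>"
    and sections: "\<And>y. emeasure lborel {t\<in>{0..1}. a + t *\<^sub>R (y - a) \<in> S} \<le> ennreal \<rho>"
  shows "measure lborel S \<le> 2 * \<rho> * measure lborel (cball a (4 * R))"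
proof -
  define B where "B = cball a (4 * R)"
  have Sb: "S \<in> sets lborel" using S by (simp add: borel_closed)
  define g where "g t y = (indicator {1/2..1} t * indicator B y * indicator S (a + t *\<^sub>R (y - a)) :: ennreal)"
    for t :: real and y :: 'a
  have "closed {p::real \<times> 'a. fst p \<in> {1/2..1} \<and> snd p \<in> B \<and> a + fst p *\<^sub>R (snd p - a) \<in> S}"
    unfolding B_def by (intro closed_Collect_conj closed_Collect_continuous_mem continuous_intros S) auto
  then have "{p::real \<times> 'a. fst p \<in> {1/2..1} \<and> snd p \<in> B \<and> a + fst p *\<^sub>R (snd p - a) \<in> S} \<in> sets lborel"
    by (simp add: borel_closed)
  then have "case_prod g \<in> borel_measurable (lborel \<Otimes>\<^sub>M lborel)"
    unfolding lborel_prod[symmetric]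
    by (rule borel_measurable_indicator[THEN measurable_cong[THEN iffD1, rotated]])
      (auto simp: g_def indicator_def)
  then have Fubini: "(\<integral>\<^sup>+y. (\<integral>\<^sup>+t. g t y \<partial>lborel) \<partial>lborel) = (\<integral>\<^sup>+t. (\<integral>\<^sup>+y. g t y \<partial>lborel) \<partial>lborel)"
    by (rule lborel_pair.Fubini')
  have upper: "(\<integral>\<^sup>+t. g t y \<partial>lborel) \<le> ennreal \<rho> * indicator B y" for y
  proof -
    define Ty where "Ty = {t\<in>{0..1}. a + t *\<^sub>R (y - a) \<in> S}"
    have "closed Ty"
      unfolding Ty_def by (intro closed_Collect_conj closed_Collect_continuous_mem continuous_intros S)
    then have Tyb: "Ty \<in> sets lborel" by (simp add: borel_closed)
    have "(\<integral>\<^sup>+t. g t y \<partial>lborel) \<le> (\<integral>\<^sup>+t. indicator B y * indicator Ty t \<partial>lborel)"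
      by (rule nn_integral_mono) (auto simp: g_def Ty_def indicator_def)
    also have "\<dots> = indicator B y * emeasure lborel Ty" by (rule nn_integral_cmult_indicator[OF Tyb])
    also have "\<dots> \<le> indicator B y * ennreal \<rho>"
      using sections[of y] unfolding Ty_def by (intro mult_left_mono) auto
    finally show ?thesis by (simp add: mult.commute)
  qed
  have lower: "indicator {1/2..1} t * emeasure lborel S \<le> (\<integral>\<^sup>+y. g t y \<partial>lborel)" for t :: real
  proof (cases "t \<in> {1/2..1}")
    case True
    define A where "A = {y. a + t *\<^sub>R (y - a) \<in> S}"
    have "A \<subseteq> B"
    proof
      fix y assume "y \<in> A"
      then have "norm (a + t *\<^sub>R (y - a)) \<le> R" using S unfolding A_def by auto
      then show "y \<in> B" unfolding B_def using a True by (intro mem_cball_of_segment_point) auto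
    qed
    then have "(\<lambda>y. g t y) = indicator A"
      using True unfolding g_def A_def by (auto simp: indicator_def fun_eq_iff)
    moreover have "A \<in> sets lborel" unfolding A_def using Sb by measurable
    ultimately have "(\<integral>\<^sup>+y. g t y \<partial>lborel) = emeasure lborel A" by simp
    then show ?thesis
      using emeasure_le_emeasure_homothety_vimage[OF Sb, of t a] True unfolding A_def by simp
  qed simp
  have "emeasure lborel S * emeasure lborel {1/2..1::real} = (\<integral>\<^sup>+t. indicator {1/2..1::real} t * emeasure lborel S \<partial>lborel)"
    by (subst nn_integral_cmult_indicator[symmetric]) (auto simp: mult.commute)
  also have "\<dots> \<le> (\<integral>\<^sup>+t. (\<integral>\<^sup>+y. g t y \<partial>lborel) \<partial>lborel)" by (rule nn_integral_mono) (rule lower)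
  also have "\<dots> \<le> (\<integral>\<^sup>+y. ennreal \<rho> * indicator B y \<partial>lborel)"
    unfolding Fubini[symmetric] by (rule nn_integral_mono) (rule upper)
  also have "\<dots> = ennreal \<rho> * emeasure lborel B" by (rule nn_integral_cmult_indicator) (simp add: B_def)
  finally have ineq: "emeasure lborel S * ennreal (1/2) \<le> ennreal \<rho> * emeasure lborel B"
    by simp
  have eS: "emeasure lborel S = ennreal (measure lborel S)"
    using S bounded_subset[OF bounded_cball S(2)] emeasure_bounded_finite[of S]
    by (simp add: emeasure_eq_ennreal_measure)
  have eB: "emeasure lborel B = ennreal (measure lborel B)"
    using emeasure_bounded_finite[of B] unfolding B_def by (simp add: emeasure_eq_ennreal_measure)
  have "ennreal (measure lborel S) * ennreal (1/2) = ennreal (measure lborel S * (1/2))"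
    by (rule ennreal_mult[symmetric]) auto
  moreover have "ennreal \<rho> * ennreal (measure lborel B) = ennreal (\<rho> * measure lborel B)"
    by (rule ennreal_mult[symmetric]) (use \<rho> in auto)
  ultimately have "ennreal (measure lborel S * (1/2)) \<le> ennreal (\<rho> * measure lborel B)"
    using ineq unfolding eS eB by simp
  then have "measure lborel S * (1/2) \<le> \<rho> * measure lborel B"
    using \<rho> by (subst (asm) ennreal_le_iff) auto
  then show ?thesis unfolding B_def by simp
qed


lemma poly_on_lines_small_in_ball:
  fixes P :: "'a::euclidean_space \<Rightarrow> complex"
  assumes P: "poly_on_lines N P" "continuous_on UNIV P" and a: "norm a \<le> R"
    and M: "cmod (P a) = M" "M > 0" and \<rho>: "0 < \<rho>" "\<rho> < 1"
  shows "measure lborel {x \<in> cball 0 R. cmod (P x) \<le> \<rho> ^ (N+1) / ((real N + 1) * exp (real N + 1) * 2 ^ N) * M}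
           \<le> 2 * \<rho> * measure lborel (cball a (4 * R))"
proof (rule measure_le_of_segment_sections)
  define \<epsilon> where "\<epsilon> = \<rho> ^ (N+1) / ((real N + 1) * exp (real N + 1) * 2 ^ N)"
  have cont_line: "continuous_on UNIV (\<lambda>t::real. cmod (P (a + t *\<^sub>R (y - a))))" for y
    by (intro continuous_intros continuous_on_compose2[OF P(2)]) auto
  have "{x \<in> cball 0 R. cmod (P x) \<le> \<epsilon> * M} = cball 0 R \<inter> {x. cmod (P x) \<le> \<epsilon> * M}" by auto
  also have "closed \<dots>"
    using P(2) by (intro closed_Int closed_cball closed_Collect_le continuous_intros) auto
  finally show "closed {x \<in> cball 0 R. cmod (P x) \<le> \<epsilon> * M}" .
  fix y
  let ?T = "{t\<in>{0..1}. cmod (P (a + t *\<^sub>R (y - a))) \<le> \<epsilon> * M}"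
  have "?T = {0..1} \<inter> {t. cmod (P (a + t *\<^sub>R (y - a))) \<le> \<epsilon> * M}" by auto
  also have "closed \<dots>"
    by (intro closed_Int closed_real_atLeastAtMost closed_Collect_le cont_line continuous_on_const)
  finally have "closed ?T" .
  have "bounded ?T" by (rule bounded_subset[of "{0..1}"]) auto
  have "emeasure lborel {t\<in>{0..1}. a + t *\<^sub>R (y - a) \<in> {x \<in> cball 0 R. cmod (P x) \<le> \<epsilon> * M}}
          \<le> emeasure lborel ?T"
    using \<open>closed ?T\<close> by (intro emeasure_mono) (auto simp: borel_closed)
  also have "\<dots> = ennreal (measure lborel ?T)"
    using emeasure_bounded_finite[OF \<open>bounded ?T\<close>] by (intro emeasure_eq_ennreal_measure) auto
  also have "\<dots> \<le> ennreal \<rho>"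
    unfolding \<epsilon>_def by (intro ennreal_leI poly_on_lines_small_on_segment[OF P(1) M \<rho>])
  finally show "emeasure lborel {t\<in>{0..1}. a + t *\<^sub>R (y - a) \<in> {x \<in> cball 0 R. cmod (P x) \<le> \<epsilon> * M}}
                  \<le> ennreal \<rho>" .
qed (use a \<rho> in auto)


section \<open>Gaussian weights\<close>

lemma integrable_exp_minus_norm_square_half:
  "integrable lebesgue (\<lambda>x::'a::euclidean_space. exp (- (norm x)\<^sup>2 / 2))"
proof -
  have "integrable lborel (\<lambda>t::real. sqrt (2 * pi) * std_normal_density t)"
    by (intro integrable_mult_right integrable_normal_density) simp
  moreover have "(\<lambda>t::real. sqrt (2 * pi) * std_normal_density t) = (\<lambda>t. exp (- t\<^sup>2 / 2))"
    by (simp add: std_normal_density_def fun_eq_iff)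
  ultimately have "integrable lborel (\<lambda>t::real. exp (- t\<^sup>2 / 2))" by simp
  then have fin1: "(\<integral>\<^sup>+t. ennreal (exp (- t\<^sup>2 / 2)) \<partial>lborel) < \<infinity>"
    using integrableD(2) by (simp add: less_top)
  have "ennreal (exp (- (norm x)\<^sup>2 / 2)) = (\<Prod>b\<in>Basis. ennreal (exp (- (x \<bullet> b)\<^sup>2 / 2)))" for x :: 'a
  proof -
    have "(norm x)\<^sup>2 = (\<Sum>b\<in>Basis. (x \<bullet> b)\<^sup>2)"
      by (simp only: power2_norm_eq_inner euclidean_inner[of x x]) (simp add: power2_eq_square)
    then show ?thesis
      by (simp add: exp_sum[symmetric] sum_negf sum_divide_distrib prod_ennreal)
  qed
  then have "(\<integral>\<^sup>+x. ennreal (exp (- (norm x)\<^sup>2 / 2)) \<partial>(lborel::'a measure)) =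
               (\<Prod>b\<in>(Basis::'a set). (\<integral>\<^sup>+t. ennreal (exp (- t\<^sup>2 / 2)) \<partial>lborel))"
    by (simp only:) (rule nn_integral_lborel_prod[where f="\<lambda>b t. ennreal (exp (- t\<^sup>2 / 2))"], auto)
  also have "\<dots> < \<infinity>" using fin1 by (simp add: power_less_top_ennreal)
  finally have "integrable lborel (\<lambda>x::'a. exp (- (norm x)\<^sup>2 / 2))"
    by (intro integrableI_nonneg) auto
  then show ?thesis by (subst integrable_completion) auto
qed

text \<open>The choice N <= R^2 is what lets exp(-r^2/2) absorb the growth (1 + r/R)^(2N) at the cost
  of a factor exp(2N) only.\<close>
lemma power_growth_times_gauss_le:
  fixes r R :: real
  assumes R: "R > 0" and NR: "real N \<le> R\<^sup>2" and r: "r \<ge> 0"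
  shows "((r + R) / R) ^ (2 * N) * exp (- r\<^sup>2) \<le> exp (2 * real N) * exp (- r\<^sup>2 / 2)"
proof -
  have "(r + R) / R \<le> exp (r / R)"
    using exp_ge_add_one_self[of "r / R"] R by (simp add: add_divide_distrib add.commute)
  then have "((r + R) / R) ^ (2 * N) \<le> exp (r / R) ^ (2 * N)"
    using R r by (intro power_mono) auto
  also have "\<dots> = exp (2 * real N * r / R)" by (simp add: exp_of_nat_mult[symmetric])
  finally have growth: "((r + R) / R) ^ (2 * N) \<le> exp (2 * real N * r / R)" .
  define q where "q = real N / R"
  have "q\<^sup>2 = real N * (real N / R\<^sup>2)" unfolding q_def by (simp add: power2_eq_square)
  also have "\<dots> \<le> real N * 1" using NR R by (intro mult_left_mono) (auto simp: field_simps)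
  finally have "q\<^sup>2 \<le> real N" by simp
  moreover have "2 * q * r \<le> 2 * q\<^sup>2 + r\<^sup>2 / 2"
    using zero_le_power2[of "2 * q - r"] by (simp add: power2_eq_square algebra_simps)
  moreover have "2 * real N * r / R = 2 * q * r" unfolding q_def by simp
  ultimately have "2 * real N * r / R - r\<^sup>2 \<le> 2 * real N - r\<^sup>2 / 2" by linarith
  have "((r + R) / R) ^ (2 * N) * exp (- r\<^sup>2) \<le> exp (2 * real N * r / R) * exp (- r\<^sup>2)"
    using growth by (intro mult_right_mono) auto
  also have "\<dots> = exp (2 * real N * r / R - r\<^sup>2)" by (simp add: exp_diff exp_minus field_simps)
  also have "\<dots> \<le> exp (2 * real N - r\<^sup>2 / 2)"
    using \<open>2 * real N * r / R - r\<^sup>2 \<le> 2 * real N - r\<^sup>2 / 2\<close> by simp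
  also have "\<dots> = exp (2 * real N) * exp (- r\<^sup>2 / 2)" by (simp add: exp_add[symmetric])
  finally show ?thesis .
qed

lemma poly_gauss_integral_le:
  fixes P :: "'a::euclidean_space \<Rightarrow> complex"
  assumes P: "poly_on_lines N P" "continuous_on UNIV P" and R: "R > 0" "real N \<le> R\<^sup>2"
    and bnd: "\<And>y. y \<in> cball 0 R \<Longrightarrow> cmod (P y) \<le> M"
  shows "integrable lebesgue (\<lambda>x. (cmod (P x))\<^sup>2 * exp (- (norm x)\<^sup>2))"
    and "(\<integral>x. (cmod (P x))\<^sup>2 * exp (- (norm x)\<^sup>2) \<partial>lebesgue) \<le>
           M\<^sup>2 * ((real N + 1)\<^sup>2 * exp (2 * real N + 2) * exp (2 * real N))
             * integral\<^sup>L lebesgue (\<lambda>x::'a. exp (- (norm x)\<^sup>2 / 2))"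
proof -
  define K where "K = (real N + 1)\<^sup>2 * exp (2 * real N + 2) * exp (2 * real N)"
  have M: "0 \<le> M" using bnd[of 0] R by (meson centre_in_cball less_imp_le norm_ge_zero order_trans)
  have pointwise: "(cmod (P x))\<^sup>2 * exp (- (norm x)\<^sup>2) \<le> M\<^sup>2 * K * exp (- (norm x)\<^sup>2 / 2)" for x
  proof -
    have "cmod (P x) \<le> M * (real N + 1) * exp (real N + 1) * ((norm x + R) / R) ^ N"
      by (rule poly_on_lines_growth[OF P(1) R(1) bnd])
    then have "(cmod (P x))\<^sup>2 \<le> (M * (real N + 1) * exp (real N + 1) * ((norm x + R) / R) ^ N)\<^sup>2"
      by (intro power_mono) auto
    also have "\<dots> = M\<^sup>2 * (real N + 1)\<^sup>2 * exp (2 * real N + 2) * ((norm x + R) / R) ^ (2 * N)"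
      by (simp add: power_mult_distrib power_mult[symmetric] mult.commute[of N]
          flip: exp_of_nat_mult)
    finally have "(cmod (P x))\<^sup>2 * exp (- (norm x)\<^sup>2) \<le>
        (M\<^sup>2 * (real N + 1)\<^sup>2 * exp (2 * real N + 2) * ((norm x + R) / R) ^ (2 * N)) * exp (- (norm x)\<^sup>2)"
      by (rule mult_right_mono) simp
    also have "\<dots> = M\<^sup>2 * (real N + 1)\<^sup>2 * exp (2 * real N + 2) * (((norm x + R) / R) ^ (2 * N) * exp (- (norm x)\<^sup>2))"
      by (simp only: mult.assoc)
    also have "\<dots> \<le> M\<^sup>2 * (real N + 1)\<^sup>2 * exp (2 * real N + 2) * (exp (2 * real N) * exp (- (norm x)\<^sup>2 / 2))"
      using power_growth_times_gauss_le[OF R norm_ge_zero] by (intro mult_left_mono) auto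
    finally show ?thesis unfolding K_def by (simp add: mult.assoc)
  qed
  have "continuous_on UNIV (\<lambda>x. (cmod (P x))\<^sup>2 * exp (- (norm x)\<^sup>2))"
    using P(2) by (intro continuous_intros)
  then have meas: "(\<lambda>x. (cmod (P x))\<^sup>2 * exp (- (norm x)\<^sup>2)) \<in> borel_measurable lebesgue"
    using borel_measurable_continuous_onI by (intro measurable_completion) simp
  have dom: "integrable lebesgue (\<lambda>x::'a. M\<^sup>2 * K * exp (- (norm x)\<^sup>2 / 2))"
    by (intro integrable_mult_right integrable_exp_minus_norm_square_half)
  show "integrable lebesgue (\<lambda>x. (cmod (P x))\<^sup>2 * exp (- (norm x)\<^sup>2))"
    by (rule Bochner_Integration.integrable_bound[OF dom meas]) (use pointwise in \<open>auto intro!: AE_I2 intro: order_trans[OF _ abs_ge_self]\<close>)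
  then have "(\<integral>x. (cmod (P x))\<^sup>2 * exp (- (norm x)\<^sup>2) \<partial>lebesgue)
               \<le> integral\<^sup>L lebesgue (\<lambda>x::'a. M\<^sup>2 * K * exp (- (norm x)\<^sup>2 / 2))"
    using dom pointwise by (rule Bochner_Integration.integral_mono)
  then show "(\<integral>x. (cmod (P x))\<^sup>2 * exp (- (norm x)\<^sup>2) \<partial>lebesgue) \<le>
      M\<^sup>2 * ((real N + 1)\<^sup>2 * exp (2 * real N + 2) * exp (2 * real N))
        * integral\<^sup>L lebesgue (\<lambda>x::'a. exp (- (norm x)\<^sup>2 / 2))"
    unfolding K_def by simp
qed


lemma mult_measure_le_set_integral:
  fixes F :: "'a \<Rightarrow> real"
  assumes G: "G \<in> fmeasurable M" "G \<subseteq> \<omega>" and \<omega>: "\<omega> \<in> sets M"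
    and F: "integrable M (\<lambda>x. indicator \<omega> x * F x)" "\<And>x. 0 \<le> F x" "\<And>x. x \<in> G \<Longrightarrow> c \<le> F x"
  shows "c * measure M G \<le> (LINT x:\<omega>|M. F x)"
proof -
  have "c * measure M G = integral\<^sup>L M (\<lambda>x. indicator G x * c)"
    using G by (simp add: fmeasurable_def mult.commute)
  also have "\<dots> \<le> integral\<^sup>L M (\<lambda>x. indicator \<omega> x * F x)"
  proof (rule Bochner_Integration.integral_mono)
    show "integrable M (\<lambda>x. indicator G x * c)"
      using G by (intro integrable_mult_left integrable_real_indicator) (auto simp: fmeasurable_def)
    show "indicator G x * c \<le> indicator \<omega> x * F x" for x
      using G F by (cases "x \<in> G") (auto simp: indicator_def)
  qed (rule F(1))
  finally show ?thesis unfolding set_lebesgue_integral_def by simp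
qed

lemma poly_gauss_set_integral_ge:
  fixes \<omega> :: "'a::euclidean_space set" and P :: "'a \<Rightarrow> complex"
  assumes \<omega>: "\<omega> \<in> sets lebesgue" and P: "poly_on_lines N P" "continuous_on UNIV P"
    and int: "integrable lebesgue (\<lambda>x. (cmod (P x))\<^sup>2 * exp (- (norm x)\<^sup>2))"
    and a: "norm a \<le> R" and \<rho>: "0 < \<rho>" "\<rho> < 1"
    and dens: "4 * \<rho> * measure lebesgue (cball a (4 * R)) \<le> measure lebesgue (\<omega> \<inter> ball 0 R)"
  shows "(\<rho> ^ (N+1) / ((real N + 1) * exp (real N + 1) * 2 ^ N) * cmod (P a))\<^sup>2 * exp (- R\<^sup>2)
           * (measure lebesgue (\<omega> \<inter> ball 0 R) / 2)
         \<le> (LINT x:\<omega>|lebesgue. (cmod (P x))\<^sup>2 * exp (- (norm x)\<^sup>2))"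
proof -
  define \<epsilon> where "\<epsilon> = \<rho> ^ (N+1) / ((real N + 1) * exp (real N + 1) * 2 ^ N)"
  define M where "M = cmod (P a)"
  define F where "F x = (cmod (P x))\<^sup>2 * exp (- (norm x)\<^sup>2)" for x
  define E where "E = \<omega> \<inter> ball 0 R"
  have J_nonneg: "0 \<le> (LINT x:\<omega>|lebesgue. F x)"
    unfolding F_def set_lebesgue_integral_def by (intro Bochner_Integration.integral_nonneg) simp
  have "(\<epsilon> * M)\<^sup>2 * exp (- R\<^sup>2) * (measure lebesgue E / 2) \<le> (LINT x:\<omega>|lebesgue. F x)"
  proof (cases "M = 0")
    case True
    then show ?thesis using J_nonneg by simp
  next
    case False
    then have "M > 0" unfolding M_def by simp
    define S where "S = {x \<in> cball 0 R. cmod (P x) \<le> \<epsilon> * M}"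
    have "S = cball 0 R \<inter> {x. cmod (P x) \<le> \<epsilon> * M}" unfolding S_def by auto
    also have "closed \<dots>"
      using P(2) by (intro closed_Int closed_cball closed_Collect_le continuous_intros) auto
    finally have S_borel: "S \<in> sets borel" by (simp add: borel_closed)
    have "measure lborel S \<le> 2 * \<rho> * measure lborel (cball a (4 * R))"
      unfolding S_def \<epsilon>_def by (rule poly_on_lines_small_in_ball[OF P a M_def[symmetric] \<open>M > 0\<close> \<rho>])
    moreover have "measure lebesgue S = measure lborel S"
      using S_borel by (intro measure_completion) simp
    moreover have "measure lebesgue (cball a (4 * R)) = measure lborel (cball a (4 * R))"
      by (intro measure_completion) simp
    ultimately have S_small: "measure lebesgue S \<le> measure lebesgue E / 2"
      using dens unfolding E_def by (simp add: field_simps)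
    define G where "G = E - S"
    have "ball 0 R \<in> sets lebesgue" by (rule sets_completionI_sets) (simp add: borel_open)
    then have E_leb: "E \<in> sets lebesgue" unfolding E_def using \<omega> by auto
    then have G_leb: "G \<in> sets lebesgue" unfolding G_def using S_borel by auto
    have bounded: "bounded (G \<union> S)" unfolding G_def E_def S_def by (rule bounded_subset[OF bounded_cball[of 0 R]]) auto
    then have "bounded G" by (rule bounded_subset) auto
    then have G_fin: "G \<in> fmeasurable lebesgue" using G_leb by (rule bounded_set_imp_lmeasurable)
    have "G \<union> S \<in> fmeasurable lebesgue"
      using bounded G_leb S_borel by (intro bounded_set_imp_lmeasurable) auto
    moreover have "E \<subseteq> G \<union> S" unfolding G_def by auto
    ultimately have "measure lebesgue E \<le> measure lebesgue (G \<union> S)"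
      using E_leb by (intro measure_mono_fmeasurable)
    also have "\<dots> \<le> measure lebesgue G + measure lebesgue S"
      using G_leb S_borel by (intro measure_Un_le) auto
    finally have G_large: "measure lebesgue E / 2 \<le> measure lebesgue G" using S_small by simp
    have F_large: "(\<epsilon> * M)\<^sup>2 * exp (- R\<^sup>2) \<le> F x" if "x \<in> G" for x
    proof -
      have x: "norm x < R" "\<epsilon> * M < cmod (P x)" using that unfolding G_def E_def S_def by auto
      have "0 \<le> \<epsilon>" unfolding \<epsilon>_def using \<rho> by simp
      then have "(\<epsilon> * M)\<^sup>2 \<le> (cmod (P x))\<^sup>2" using x \<open>M > 0\<close> by (intro power_mono) auto
      moreover have "(norm x)\<^sup>2 \<le> R\<^sup>2" using x by (intro power_mono) auto
      then have "exp (- R\<^sup>2) \<le> exp (- (norm x)\<^sup>2)" by simp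
      ultimately show ?thesis unfolding F_def by (intro mult_mono) auto
    qed
    have "(\<epsilon> * M)\<^sup>2 * exp (- R\<^sup>2) * (measure lebesgue E / 2) \<le> (\<epsilon> * M)\<^sup>2 * exp (- R\<^sup>2) * measure lebesgue G"
      by (rule mult_left_mono[OF G_large]) simp
    also have "\<dots> \<le> (LINT x:\<omega>|lebesgue. F x)"
      using G_fin \<omega> integrable_mult_indicator[OF \<omega> int, folded F_def] F_large
      by (intro mult_measure_le_set_integral) (auto simp: F_def G_def E_def)
    finally show ?thesis .
  qed
  then show ?thesis unfolding \<epsilon>_def M_def E_def F_def .
qed


lemma observability_constant_le:
  fixes \<rho> G \<gamma> V R1 :: real
  assumes r: "\<rho> > 0" and G: "G \<ge> 0" and g: "\<gamma> > 0" and V: "V > 0"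
  shows "(real N + 1)\<^sup>2 * exp (2 * real N + 2) * exp (2 * real N) * G * 2 * exp (R1\<^sup>2 + real N) /
           ((\<rho> ^ (N+1) / ((real N + 1) * exp (real N + 1) * 2 ^ N))\<^sup>2 * \<gamma> * V)
         \<le> (2 * G * exp (R1\<^sup>2) * exp 4 / (\<rho>\<^sup>2 * \<gamma> * V)) * (exp 11 * 4 / \<rho>\<^sup>2) ^ N"
proof -
  define a where "a = real N + 1"
  define x where "x = exp (real N)"
  have a0: "a > 0" unfolding a_def by simp
  have x0: "x > 0" unfolding x_def by simp
  have e1: "exp (2 * real N + 2) = x\<^sup>2 * exp 2" unfolding x_def by (simp add: exp_add[symmetric] power2_eq_square)
  have e2: "exp (2 * real N) = x\<^sup>2" unfolding x_def by (simp add: exp_add[symmetric] power2_eq_square)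
  have e3: "exp (R1\<^sup>2 + real N) = exp (R1\<^sup>2) * x" unfolding x_def by (simp add: exp_add)
  have e4: "exp (real N + 1) = x * exp 1" unfolding x_def by (simp add: exp_add)
  have e5: "exp (2::real) = exp 1 ^ 2" by (simp add: power2_eq_square exp_add[symmetric])
  have e6: "exp (4::real) = exp 1 ^ 4" by (metis exp_of_nat_mult mult.right_neutral of_nat_numeral)
  have p24': "(2::real) ^ (2 * N) = 4 ^ N" by (simp add: power_mult)
  have p24: "(2::real) ^ (N * 2) = 4 ^ N" using p24' by (simp add: mult.commute)
  have q1: "(\<rho> ^ N)\<^sup>2 = \<rho> ^ (N * 2)" by (simp add: power_mult)
  have q2: "((2::real) ^ N)\<^sup>2 = 4 ^ N" using p24 by (simp add: power_mult[symmetric])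
  have x7: "x * x ^ 6 = x ^ 7" by (simp add: power_Suc[symmetric] del: power_Suc)
  have lhs: "(real N + 1)\<^sup>2 * exp (2 * real N + 2) * exp (2 * real N) * G * 2 * exp (R1\<^sup>2 + real N) /
       ((\<rho> ^ (N+1) / ((real N + 1) * exp (real N + 1) * 2 ^ N))\<^sup>2 * \<gamma> * V)
     = a ^ 4 * x ^ 7 * 4 ^ N / \<rho> ^ (2 * N) * (2 * G * exp (R1\<^sup>2) * exp 4 / (\<rho>\<^sup>2 * \<gamma> * V))"
    unfolding e1 e2 e3 e4 e6 unfolding a_def[symmetric] using a0 x0 r g V
    by (simp add: e5 p24 p24' q1 q2 x7 power_mult_distrib power_divide power_add field_simps)
  have "a \<le> x" unfolding a_def x_def using exp_ge_add_one_self[of "real N"] by linarith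
  then have "a ^ 4 \<le> x ^ 4" using a0 by (intro power_mono) auto
  then have "a ^ 4 * x ^ 7 * 4 ^ N / \<rho> ^ (2 * N) \<le> x ^ 4 * x ^ 7 * 4 ^ N / \<rho> ^ (2 * N)"
    using x0 r by (intro divide_right_mono mult_right_mono) auto
  also have "x ^ 4 * x ^ 7 * 4 ^ N / \<rho> ^ (2 * N) = (exp 11 * 4 / \<rho>\<^sup>2) ^ N"
  proof -
    have "x ^ 4 * x ^ 7 = x ^ 11" by (simp add: power_add[symmetric])
    also have "x ^ 11 = exp 11 ^ N" unfolding x_def
      by (metis exp_of_nat_mult mult.commute of_nat_numeral)
    finally show ?thesis by (simp add: power_mult_distrib power_divide power_mult)
  qed
  finally have b: "a ^ 4 * x ^ 7 * 4 ^ N / \<rho> ^ (2 * N) \<le> (exp 11 * 4 / \<rho>\<^sup>2) ^ N" .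
  have "0 \<le> 2 * G * exp (R1\<^sup>2) * exp 4 / (\<rho>\<^sup>2 * \<gamma> * V)" using G r g V by simp
  from mult_right_mono[OF b this] show ?thesis unfolding lhs by (simp add: mult.commute)
qed

lemma poly_gauss_integral_le_set_integral:
  fixes \<omega> :: "'a::euclidean_space set" and P :: "'a \<Rightarrow> complex"
  assumes \<omega>: "\<omega> \<in> sets lebesgue" and \<gamma>: "0 < \<gamma>" "\<gamma> \<le> 1/2" and R1: "1 \<le> R1"
    and dens: "\<And>R. R1 \<le> R \<Longrightarrow> \<gamma> * measure lebesgue (ball (0::'a) R) \<le> measure lebesgue (\<omega> \<inter> ball 0 R)"
    and P: "poly_on_lines N P" "continuous_on UNIV P"
  defines "\<rho> \<equiv> \<gamma> / (4 * 4 ^ DIM('a))"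
    and "G \<equiv> integral\<^sup>L lebesgue (\<lambda>x::'a. exp (- (norm x)\<^sup>2 / 2))"
    and "V \<equiv> measure lebesgue (ball (0::'a) R1)"
  shows "(\<integral>x. (cmod (P x))\<^sup>2 * exp (- (norm x)\<^sup>2) \<partial>lebesgue) \<le>
           (real N + 1)\<^sup>2 * exp (2 * real N + 2) * exp (2 * real N) * G * 2 * exp (R1\<^sup>2 + real N) /
             ((\<rho> ^ (N+1) / ((real N + 1) * exp (real N + 1) * 2 ^ N))\<^sup>2 * \<gamma> * V)
           * (LINT x:\<omega>|lebesgue. (cmod (P x))\<^sup>2 * exp (- (norm x)\<^sup>2))"
    (is "?I \<le> ?\<Phi> * ?J")
proof -
  define \<epsilon> where "\<epsilon> = \<rho> ^ (N+1) / ((real N + 1) * exp (real N + 1) * 2 ^ N)"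
  define K where "K = (real N + 1)\<^sup>2 * exp (2 * real N + 2) * exp (2 * real N)"
  define R where "R = sqrt (R1\<^sup>2 + real N)"
  have R: "R\<^sup>2 = R1\<^sup>2 + real N" "R1 \<le> R" unfolding R_def using R1 by (auto intro: real_le_rsqrt)
  then have "R > 0" "real N \<le> R\<^sup>2" using R1 by auto
  have cont: "continuous_on (cball 0 R) (\<lambda>x. cmod (P x))"
    using P(2) by (intro continuous_intros) (auto intro: continuous_on_subset)
  obtain a where a: "a \<in> cball 0 R" and max: "\<And>y. y \<in> cball 0 R \<Longrightarrow> cmod (P y) \<le> cmod (P a)"
    using continuous_attains_sup[OF compact_cball _ cont] \<open>R > 0\<close> by auto
  define M where "M = cmod (P a)"
  define D where "D = \<epsilon>\<^sup>2 * exp (- R\<^sup>2) * \<gamma> * V / 2"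
  have "\<gamma> < 4 * 4 ^ DIM('a)" using \<gamma> one_le_power[of "4::real" "DIM('a)"] by linarith
  then have \<rho>: "0 < \<rho>" "\<rho> < 1" unfolding \<rho>_def using \<gamma> by auto
  have upper: "?I \<le> M\<^sup>2 * K * G"
    using poly_gauss_integral_le(2)[OF P \<open>R > 0\<close> \<open>real N \<le> R\<^sup>2\<close> max] unfolding M_def K_def G_def .
  have ball_R: "measure lebesgue (ball (0::'a) R) = unit_ball_vol DIM('a) * R ^ DIM('a)"
    using \<open>R > 0\<close> by (simp add: content_ball)
  have "\<gamma> * V \<le> \<gamma> * measure lebesgue (ball (0::'a) R)"
    unfolding V_def ball_R using R1 R \<gamma> by (simp add: content_ball)
  also have "\<dots> \<le> measure lebesgue (\<omega> \<inter> ball 0 R)" using dens R by simp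
  finally have dens_R: "\<gamma> * V \<le> measure lebesgue (\<omega> \<inter> ball 0 R)" .
  have "4 * \<rho> * measure lebesgue (cball a (4 * R)) = \<gamma> * measure lebesgue (ball (0::'a) R)"
    unfolding ball_R \<rho>_def using \<open>R > 0\<close> by (simp add: content_cball power_mult_distrib)
  then have "(\<epsilon> * M)\<^sup>2 * exp (- R\<^sup>2) * (measure lebesgue (\<omega> \<inter> ball 0 R) / 2) \<le> ?J"
    unfolding \<epsilon>_def M_def using dens R \<rho> a
    by (intro poly_gauss_set_integral_ge[OF \<omega> P poly_gauss_integral_le(1)[OF P \<open>R > 0\<close> \<open>real N \<le> R\<^sup>2\<close> max]])
      (auto simp: \<rho>_def)
  moreover have "(\<epsilon> * M)\<^sup>2 * exp (- R\<^sup>2) * (\<gamma> * V / 2) \<le> (\<epsilon> * M)\<^sup>2 * exp (- R\<^sup>2) * (measure lebesgue (\<omega> \<inter> ball 0 R) / 2)"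
    using dens_R by (intro mult_left_mono) auto
  ultimately have lower: "M\<^sup>2 * D \<le> ?J"
    unfolding D_def by (simp add: power_mult_distrib mult_ac)
  have "\<epsilon> > 0" unfolding \<epsilon>_def using \<rho> by simp
  moreover have "V > 0" unfolding V_def using R1 by (simp add: content_ball)
  ultimately have "D > 0" unfolding D_def using \<gamma> by simp
  have "G \<ge> 0" unfolding G_def by (intro Bochner_Integration.integral_nonneg) simp
  have "?I \<le> (K * G / D) * (M\<^sup>2 * D)"
    using upper \<open>D > 0\<close> by (simp add: field_simps)
  also have "\<dots> \<le> (K * G / D) * ?J"
    using lower \<open>D > 0\<close> \<open>G \<ge> 0\<close> unfolding K_def by (intro mult_left_mono) auto
  also have "K * G / D = ?\<Phi>"
    using \<open>\<epsilon> > 0\<close> \<open>V > 0\<close> \<gamma> unfolding \<epsilon>_def[symmetric] K_def D_def R(1)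
    by (simp add: exp_minus field_simps flip: exp_add)
  finally show ?thesis .
qed


lemma exists_exp_bound_of_geometric:
  fixes A B :: real
  assumes A: "0 \<le> A" and B: "0 < B"
  obtains C where "1 < C" "\<And>N::nat. A * B ^ N \<le> (C * exp (C * real N))\<^sup>2"
proof -
  define C where "C = max 2 (max (sqrt A) (ln B))"
  have "A \<le> C\<^sup>2"
    using A real_sqrt_le_iff[of A "C\<^sup>2"] unfolding C_def by (metis abs_of_nonneg max.coboundedI1 max.commute
        max.cobounded2 order_trans real_sqrt_abs zero_le_numeral le_max_iff_disj)
  have "A * B ^ N \<le> (C * exp (C * real N))\<^sup>2" for N :: nat
  proof -
    have "B ^ N = exp (real N * ln B)" using B by (simp add: exp_of_nat_mult)
    also have "\<dots> \<le> exp (2 * C * real N)"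
      using mult_left_mono[of "ln B" "2 * C" "real N"] unfolding C_def by (auto simp: mult_ac)
    finally have "A * B ^ N \<le> C\<^sup>2 * exp (2 * C * real N)"
      using \<open>A \<le> C\<^sup>2\<close> A B by (intro mult_mono) auto
    also have "\<dots> = (C * exp (C * real N))\<^sup>2"
      by (simp add: power_mult_distrib power2_eq_square exp_add[symmetric])
    finally show ?thesis .
  qed
  moreover have "1 < C" unfolding C_def by simp
  ultimately show thesis using that by blast
qed

lemma poly_gauss_observability:
  fixes \<omega> :: "'a::euclidean_space set"
  assumes \<omega>: "\<omega> \<in> sets lebesgue" and \<gamma>: "0 < \<gamma>" and R1: "1 \<le> R1"
    and dens: "\<And>R. R1 \<le> R \<Longrightarrow> \<gamma> * measure lebesgue (ball (0::'a) R) \<le> measure lebesgue (\<omega> \<inter> ball 0 R)"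
  obtains C where "1 < C"
    "\<And>N P. poly_on_lines N P \<Longrightarrow> continuous_on UNIV P \<Longrightarrow>
       (\<integral>x. (cmod (P x))\<^sup>2 * exp (- (norm x)\<^sup>2) \<partial>lebesgue)
         \<le> (C * exp (C * real N))\<^sup>2 * (LINT x:\<omega>|lebesgue. (cmod (P x))\<^sup>2 * exp (- (norm x)\<^sup>2))"
proof -
  define \<gamma>' where "\<gamma>' = min \<gamma> (1/2)"
  define \<rho> where "\<rho> = \<gamma>' / (4 * 4 ^ DIM('a))"
  define G where "G = integral\<^sup>L lebesgue (\<lambda>x::'a. exp (- (norm x)\<^sup>2 / 2))"
  define V where "V = measure lebesgue (ball (0::'a) R1)"
  have \<gamma>': "0 < \<gamma>'" "\<gamma>' \<le> 1/2" unfolding \<gamma>'_def using \<gamma> by auto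
  have "\<rho> > 0" unfolding \<rho>_def using \<gamma>' by simp
  have "G \<ge> 0" unfolding G_def by (intro Bochner_Integration.integral_nonneg) simp
  have "V > 0" unfolding V_def using R1 by (simp add: content_ball)
  have dens': "\<And>R. R1 \<le> R \<Longrightarrow> \<gamma>' * measure lebesgue (ball (0::'a) R) \<le> measure lebesgue (\<omega> \<inter> ball 0 R)"
    using dens unfolding \<gamma>'_def by (meson min.cobounded1 measure_nonneg mult_right_mono order_trans)
  define A where "A = 2 * G * exp (R1\<^sup>2) * exp 4 / (\<rho>\<^sup>2 * \<gamma>' * V)"
  define B where "B = exp 11 * 4 / \<rho>\<^sup>2"
  have "0 \<le> A" unfolding A_def using \<open>G \<ge> 0\<close> \<open>\<rho> > 0\<close> \<gamma>' \<open>V > 0\<close> by simp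
  moreover have "0 < B" unfolding B_def using \<open>\<rho> > 0\<close> by simp
  ultimately obtain C where "1 < C" and C: "\<And>N::nat. A * B ^ N \<le> (C * exp (C * real N))\<^sup>2"
    using exists_exp_bound_of_geometric by blast
  show thesis
  proof (rule that[OF \<open>1 < C\<close>])
    fix N and P :: "'a \<Rightarrow> complex"
    assume "poly_on_lines N P" "continuous_on UNIV P"
    then obtain \<Phi> where bound: "(\<integral>x. (cmod (P x))\<^sup>2 * exp (- (norm x)\<^sup>2) \<partial>lebesgue)
        \<le> \<Phi> * (LINT x:\<omega>|lebesgue. (cmod (P x))\<^sup>2 * exp (- (norm x)\<^sup>2))" and "\<Phi> \<le> A * B ^ N"
      using poly_gauss_integral_le_set_integral[OF \<omega> \<gamma>' R1 dens', folded \<rho>_def G_def V_def]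
        observability_constant_le[OF \<open>\<rho> > 0\<close> \<open>G \<ge> 0\<close> \<gamma>'(1) \<open>V > 0\<close>, of N R1]
      unfolding A_def B_def by blast
    note bound
    also have "\<Phi> * (LINT x:\<omega>|lebesgue. (cmod (P x))\<^sup>2 * exp (- (norm x)\<^sup>2))
        \<le> (C * exp (C * real N))\<^sup>2 * (LINT x:\<omega>|lebesgue. (cmod (P x))\<^sup>2 * exp (- (norm x)\<^sup>2))"
      using \<open>\<Phi> \<le> A * B ^ N\<close> C[of N] unfolding set_lebesgue_integral_def
      by (intro mult_right_mono Bochner_Integration.integral_nonneg) auto
    finally show "(\<integral>x. (cmod (P x))\<^sup>2 * exp (- (norm x)\<^sup>2) \<partial>lebesgue) \<le>
        (C * exp (C * real N))\<^sup>2 * (LINT x:\<omega>|lebesgue. (cmod (P x))\<^sup>2 * exp (- (norm x)\<^sup>2))" .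
  qed
qed

lemma uniform_density_of_Liminf:
  fixes \<omega> :: "'a::euclidean_space set"
  assumes "Liminf at_top (\<lambda>R::real. ereal (measure lebesgue (\<omega> \<inter> ball 0 R)
             / measure lebesgue (ball (0 :: 'a) R))) > 0"
  obtains \<gamma> R1 where "0 < \<gamma>" "1 \<le> R1"
    "\<And>R. R1 \<le> R \<Longrightarrow> \<gamma> * measure lebesgue (ball (0::'a) R) \<le> measure lebesgue (\<omega> \<inter> ball 0 R)"
proof -
  obtain c where "0 < c" and c: "c < Liminf at_top (\<lambda>R::real. ereal (measure lebesgue (\<omega> \<inter> ball 0 R)
                                   / measure lebesgue (ball (0 :: 'a) R)))"
    using dense[OF assms] by blast
  then obtain \<gamma> where "c = ereal \<gamma>" by (cases c) auto
  then have "\<gamma> > 0" using \<open>0 < c\<close> by simp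
  from less_LiminfD[OF c] obtain R0 where
    R0: "\<And>R. R0 \<le> R \<Longrightarrow> \<gamma> < measure lebesgue (\<omega> \<inter> ball 0 R) / measure lebesgue (ball (0 :: 'a) R)"
    unfolding eventually_at_top_linorder \<open>c = ereal \<gamma>\<close> by auto
  show thesis
  proof (rule that[of \<gamma> "max R0 1"])
    fix R assume "max R0 1 \<le> R"
    then have "0 < measure lebesgue (ball (0::'a) R)" "R0 \<le> R" by auto
    with R0 show "\<gamma> * measure lebesgue (ball (0::'a) R) \<le> measure lebesgue (\<omega> \<inter> ball 0 R)"
      by (metis pos_less_divide_eq less_imp_le)
  qed (use \<open>\<gamma> > 0\<close> in auto)
qed

lemma L2_norm_on_poly_gauss:
  "L2_norm_on A (\<lambda>x. P x * complex_of_real (exp (- (norm x)\<^sup>2 / 2)))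
     = sqrt (LINT x:A|lebesgue. (cmod (P x))\<^sup>2 * exp (- (norm x)\<^sup>2))"
proof -
  have "(cmod (P x * complex_of_real (exp (- (norm x)\<^sup>2 / 2))))\<^sup>2 = (cmod (P x))\<^sup>2 * exp (- (norm x)\<^sup>2)" for x
    by (simp add: norm_mult power_mult_distrib power2_eq_square exp_add[symmetric])
  then show ?thesis unfolding L2_norm_on_def by simp
qed

theorem mainTheorem2:
  fixes \<omega> :: "(real ^ 'n::finite) set"
  assumes "\<omega> \<in> sets lebesgue"
    and "Liminf at_top (\<lambda>R::real. ereal (measure lebesgue (\<omega> \<inter> ball 0 R)
            / measure lebesgue (ball (0 :: real ^ 'n) R))) > 0"
  shows "\<exists>C>1. \<forall>N::nat. \<forall>f\<in>hermite_space N.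
           L2_norm_on UNIV f \<le> C * exp (C * real N) * L2_norm_on \<omega> f"
proof -
  obtain \<gamma> R1 where density: "0 < \<gamma>" "1 \<le> R1"
    "\<And>R. R1 \<le> R \<Longrightarrow> \<gamma> * measure lebesgue (ball (0::real ^ 'n) R) \<le> measure lebesgue (\<omega> \<inter> ball 0 R)"
    using uniform_density_of_Liminf[OF assms(2)] by blast
  obtain C where "1 < C" and observability: "\<And>N P. poly_on_lines N P \<Longrightarrow> continuous_on UNIV P \<Longrightarrow>
      (LINT x:UNIV|lebesgue. (cmod (P x))\<^sup>2 * exp (- (norm x)\<^sup>2))
        \<le> (C * exp (C * real N))\<^sup>2 * (LINT x:\<omega>|lebesgue. (cmod (P x))\<^sup>2 * exp (- (norm x)\<^sup>2))"
    using poly_gauss_observability[OF assms(1) density] by (auto simp: set_lebesgue_integral_def)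
  have "L2_norm_on UNIV f \<le> C * exp (C * real N) * L2_norm_on \<omega> f" if hf: "f \<in> hermite_space N" for N f
  proof -
    obtain P where P: "poly_on_lines N P" "continuous_on UNIV P"
      and f: "f = (\<lambda>x. P x * complex_of_real (exp (- (norm x)\<^sup>2 / 2)))"
      using hermite_space_eq_poly_gauss[OF hf] by blast
    have "0 \<le> C * exp (C * real N)" using \<open>1 < C\<close> by simp
    then show ?thesis
      using real_sqrt_le_mono[OF observability[OF P]]
      unfolding f L2_norm_on_poly_gauss by (simp add: real_sqrt_mult)
  qed
  then show ?thesis using \<open>1 < C\<close> by blast
qed

end
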